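(* Let $n\ge1$ be an integer and, for $j=0,\dots,n$, let $f_{2j}$ be a homogeneous polynomial of degree $2j$ with complex coefficients in the four entries of a $2\times2$ matrix, not divisible by $\det$ (viewed as a degree-$2$ polynomial). Let $S_{2n}\subset\mathbb{K}P^3$ be the surface defined by $F_{2n}(A)=0$, where $$F_{2n}(A)=\sum_{j=0}^n t^{-j(j+1)}(\det A)^{n-j}f_{2j}(A).$$ Let $C_{2j}=\{[B]_{\mathbb{C}^*}\in Q(\mathbb{C}): f_{2j}(B)=0\}$. For $j=1,\dots,n$ let $\sigma_j$ be the section of $\mathcal{S}$ over $Q(\mathbb{C})\setminus(C_{2j-2}\cup C_{2j})$ given by $\sigma_j([B]_{\mathbb{C}^*})=\left[\sqrt{-\tfrac{f_{2j-2}(B)}{f_{2j}(B)}}\,B\right]_{\mathbb{R}^*}$. Then $$\operatorname{VAL}(S_{2n})\subset\Sigma_\infty\cup\Sigma_R\cup\Sigma_C,$$ where $\Sigma_\infty=\{\infty\}\times C_{2n}$, $\Sigma_R=\bigcup_{j=1}^{n-1}((j,j+1)\cap\mathbb{Q})\times\mathcal{S}|_{C_{2j}}\ \cup\ ((n,\infty)\cap\mathbb{Q})\times\mathcal{S}|_{C_{2n}}$, and $\Sigma_C=\bigcup_{j=1}^n\{j\}\times\Big(\sigma_j\big(Q(\mathbb{C})\setminus(C_{2j-2}\cup C_{2j})\big)\cup\mathcal{S}|_{C_{2j-2}\cap C_{2j}}\Big)$.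
   Context: Matrices and classes. For a $2\times 2$ matrix $B=\begin{pmatrix}a&b\\ c&d\end{pmatrix}$ write $B^{\mathbf c}=\begin{pmatrix}d&-b\\ -c&a\end{pmatrix}$; $B^*$ is the conjugate transpose. $\mathbb{C}P^3$ is the projectivization of the space of complex $2\times2$ matrices; $[B]_{\mathbb{C}^*}$ is the class of a nonzero matrix up to nonzero complex scalars, $[B]_{\mathbb{R}^*}$ its class up to nonzero real scalars. $Q(\mathbb{C})=\{[B]_{\mathbb{C}^*}:\det B=0\}$, $PSU(2)=\{[U]_{\mathbb{C}^*}:U\in SU(2)\}$. Circle bundle. $\mathcal{S}$ is the set of classes $[B]_{\mathbb{R}^*}$ of complex $2\times2$ matrices of rank one, with projection $\pi\colon\mathcal{S}\to Q(\mathbb{C})$, $[B]_{\mathbb{R}^*}\mapsto[B]_{\mathbb{C}^*}$; for $Z\subset Q(\mathbb{C})$, $\mathcal{S}|_Z=\pi^{-1}(Z)$; a section over $Z$ is a map $\sigma\colon Z\to\mathcal{S}$ with $\pi\circ\sigma=\mathrm{id}_Z$ (the formula for $\sigma_j$ is independent of the representative $B$ and the choice of square root, since classes are taken up to real scalars). Cone notation (subsets of $\mathbb{C}P^3$). For $I\subset(0,\infty)$ and $T\subset\mathcal{S}$, $I\times T:=\{[e^\alpha B+e^{-\alpha}(B^{\mathbf c})^*]_{\mathbb{C}^*}:\alpha\in I,\ [B]_{\mathbb{R}^*}\in T\}$; for $Y\subset Q(\mathbb{C})$, $\{\infty\}\times Y:=Y$. Field and valuation. $\mathbb{K}$ is the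 field of Puiseux series in $t$ (with $t\to\infty$) with complex coefficients, i.e. series $\sum_q a_q t^q$ with $a_q\in\mathbb{C}$ and exponents in $\frac1N\mathbb{Z}$ for some $N\ge1$, bounded above. $\mathbb{K}P^3$ is the projectivization of the space of $2\times 2$ matrices over $\mathbb{K}$. Every nonzero matrix $A$ over $\mathbb{K}$ can be written uniquely as $A=t^\alpha B+(\text{terms with exponents}<\alpha)$ with $\alpha\in\mathbb{Q}$ and $B$ a nonzero complex matrix. The map $\operatorname{VAL}\colon\mathbb{K}P^3\to\mathbb{C}P^3$ is: if $\det A=0$, $\operatorname{VAL}([A])=[B]_{\mathbb{C}^*}$; if $\det A\ne0$, rescale $A$ so that $\det A=1$ (then $\alpha\ge0$), and set $\operatorname{VAL}([A])=[e^\alpha B+e^{-\alpha}(B^{\mathbf c})^*]_{\mathbb{C}^*}$. *)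

theory Defs
  imports Complex_Main
begin

section \<open>2x2 matrices (entries a b c d, i.e. [[a,b],[c,d]])\<close>

datatype 'a mat2 = M2 'a 'a 'a 'a

fun ents :: "'a mat2 \<Rightarrow> 'a list" where
  "ents (M2 a b c d) = [a, b, c, d]"

fun cdet :: "complex mat2 \<Rightarrow> complex" where
  "cdet (M2 a b c d) = a * d - b * c"

definition czero :: "complex mat2" where "czero = M2 0 0 0 0"

definition csmult :: "complex \<Rightarrow> complex mat2 \<Rightarrow> complex mat2" where
  "csmult z B = map_mat2 (\<lambda>x. z * x) B"

fun cadd :: "complex mat2 \<Rightarrow> complex mat2 \<Rightarrow> complex mat2" where
  "cadd (M2 a b c d) (M2 a' b' c' d') = M2 (a + a') (b + b') (c + c') (d + d')"

fun adjc :: "complex mat2 \<Rightarrow> complex mat2" where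
  "adjc (M2 a b c d) = M2 d (- b) (- c) a"

fun cstar :: "complex mat2 \<Rightarrow> complex mat2" where
  "cstar (M2 a b c d) = M2 (cnj a) (cnj c) (cnj b) (cnj d)"

text \<open>class up to nonzero complex scalars (a point of CP^3) and up to nonzero real scalars\<close>
definition cproj :: "complex mat2 \<Rightarrow> complex mat2 set" where
  "cproj B = {csmult z B | z. z \<noteq> 0}"

definition rproj :: "complex mat2 \<Rightarrow> complex mat2 set" where
  "rproj B = {csmult (complex_of_real r) B | r. r \<noteq> 0}"

definition Qset :: "complex mat2 set set" where
  "Qset = {cproj B | B. B \<noteq> czero \<and> cdet B = 0}"

text \<open>the circle bundle S restricted to Z \<subseteq> Q(C)\<close>
definition restrS :: "complex mat2 set set \<Rightarrow> complex mat2 set set" where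
  "restrS Z = {rproj B | B. B \<noteq> czero \<and> cdet B = 0 \<and> cproj B \<in> Z}"

text \<open>the cone notation I \<times> T\<close>
definition cone :: "real set \<Rightarrow> complex mat2 set set \<Rightarrow> complex mat2 set set" where
  "cone I T = {cproj (cadd (csmult (complex_of_real (exp \<alpha>)) B)
                           (csmult (complex_of_real (exp (- \<alpha>))) (cstar (adjc B))))
               | \<alpha> B. \<alpha> \<in> I \<and> B \<noteq> czero \<and> rproj B \<in> T}"

section \<open>Homogeneous polynomials in the four entries (coefficient functions)\<close>

type_synonym cpoly4 = "nat \<times> nat \<times> nat \<times> nat \<Rightarrow> complex"

definition homog :: "cpoly4 \<Rightarrow> nat \<Rightarrow> bool" where
  "homog p d \<longleftrightarrow> (\<forall>i j k l. p (i, j, k, l) \<noteq> 0 \<longrightarrow> i + j + k + l = d)"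

text \<open>coefficients of the product det * g, det = x1 x4 - x2 x3\<close>
fun detmul :: "cpoly4 \<Rightarrow> cpoly4" where
  "detmul g (i, j, k, l) =
     (if 1 \<le> i \<and> 1 \<le> l then g (i - 1, j, k, l - 1) else 0)
   - (if 1 \<le> j \<and> 1 \<le> k then g (i, j - 1, k - 1, l) else 0)"

definition det_dvd :: "cpoly4 \<Rightarrow> bool" where
  "det_dvd p \<longleftrightarrow> (\<exists>g. finite {e. g e \<noteq> 0} \<and> (\<forall>e. p e = detmul g e))"

fun evalC :: "cpoly4 \<Rightarrow> complex mat2 \<Rightarrow> complex" where
  "evalC p (M2 a b c d) =
     (\<Sum>e\<in>{e. p e \<noteq> 0}. p e * (case e of (i, j, k, l) \<Rightarrow> a ^ i * b ^ j * c ^ k * d ^ l))"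

section \<open>Puiseux series (t \<rightarrow> \<infinity>): coefficient functions rat \<Rightarrow> complex\<close>

type_synonym ps = "rat \<Rightarrow> complex"

definition puiseux :: "ps \<Rightarrow> bool" where
  "puiseux a \<longleftrightarrow> (\<exists>N::nat. N \<ge> 1 \<and> (\<forall>q. a q \<noteq> 0 \<longrightarrow> q * of_nat N \<in> \<int>))
                  \<and> bdd_above {q. a q \<noteq> 0}"

definition pzero :: ps where "pzero = (\<lambda>_. 0)"

definition tpow :: "rat \<Rightarrow> ps" where
  "tpow r = (\<lambda>q. if q = r then 1 else 0)"

text \<open>product (Cauchy convolution; finite sums for Puiseux series)\<close>
definition conv :: "ps \<Rightarrow> ps \<Rightarrow> ps" where
  "conv a b = (\<lambda>q. \<Sum>r\<in>{r. a r \<noteq> 0 \<and> b (q - r) \<noteq> 0}. a r * b (q - r))"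

primrec ppow :: "ps \<Rightarrow> nat \<Rightarrow> ps" where
  "ppow a 0 = tpow 0"
| "ppow a (Suc n) = conv a (ppow a n)"

fun Kdet :: "ps mat2 \<Rightarrow> ps" where
  "Kdet (M2 a b c d) = (\<lambda>q. conv a d q - conv b c q)"

fun evalK :: "cpoly4 \<Rightarrow> ps mat2 \<Rightarrow> ps" where
  "evalK p (M2 a b c d) = (\<lambda>q.
     \<Sum>e\<in>{e. p e \<noteq> 0}. p e * (case e of (i, j, k, l) \<Rightarrow>
        conv (conv (ppow a i) (ppow b j)) (conv (ppow c k) (ppow d l)) q))"

text \<open>nonzero 2x2 matrices over K (representatives of points of KP^3)\<close>
definition Kmat :: "ps mat2 \<Rightarrow> bool" where
  "Kmat A \<longleftrightarrow> (\<forall>x\<in>set (ents A). puiseux x) \<and> A \<noteq> M2 pzero pzero pzero pzero"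

text \<open>A = t^alpha B + lower order terms\<close>
definition lexp :: "ps mat2 \<Rightarrow> rat" where
  "lexp A = (GREATEST q. \<exists>x\<in>set (ents A). x q \<noteq> 0)"

definition lead :: "ps mat2 \<Rightarrow> complex mat2" where
  "lead A = map_mat2 (\<lambda>x. x (lexp A)) A"

definition VAL :: "ps mat2 \<Rightarrow> complex mat2 set" where
  "VAL A = (if Kdet A = pzero then cproj (lead A)
            else (let l = (SOME l. puiseux l \<and> conv (conv l l) (Kdet A) = tpow 0);
                      A' = map_mat2 (conv l) A;
                      \<alpha> = real_of_rat (lexp A');
                      B = lead A'
                  in cproj (cadd (csmult (complex_of_real (exp \<alpha>)) B)
                                 (csmult (complex_of_real (exp (- \<alpha>))) (cstar (adjc B))))))"

section \<open>The objects of the theorem (f j stands for f_{2j})\<close>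

definition Fpoly :: "nat \<Rightarrow> (nat \<Rightarrow> cpoly4) \<Rightarrow> ps mat2 \<Rightarrow> ps" where
  "Fpoly n f A = (\<lambda>q. \<Sum>j\<in>{0..n}.
      conv (tpow (- of_nat (j * (j + 1))))
           (conv (ppow (Kdet A) (n - j)) (evalK (f j) A)) q)"

definition Surf :: "nat \<Rightarrow> (nat \<Rightarrow> cpoly4) \<Rightarrow> ps mat2 set" where
  "Surf n f = {A. Kmat A \<and> Fpoly n f A = pzero}"

definition Cset :: "(nat \<Rightarrow> cpoly4) \<Rightarrow> nat \<Rightarrow> complex mat2 set set" where
  "Cset f j = {cproj B | B. B \<noteq> czero \<and> cdet B = 0 \<and> evalC (f j) B = 0}"

definition sigma :: "(nat \<Rightarrow> cpoly4) \<Rightarrow> nat \<Rightarrow> complex mat2 \<Rightarrow> complex mat2 set" where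
  "sigma f j B = rproj (csmult (csqrt (- (evalC (f (j - 1)) B / evalC (f j) B))) B)"

definition sigma_img :: "(nat \<Rightarrow> cpoly4) \<Rightarrow> nat \<Rightarrow> complex mat2 set set" where
  "sigma_img f j = {sigma f j B | B. B \<noteq> czero \<and>
                     cproj B \<in> Qset - (Cset f (j - 1) \<union> Cset f j)}"

definition Sig_inf :: "nat \<Rightarrow> (nat \<Rightarrow> cpoly4) \<Rightarrow> complex mat2 set set" where
  "Sig_inf n f = Cset f n"

definition Sig_R :: "nat \<Rightarrow> (nat \<Rightarrow> cpoly4) \<Rightarrow> complex mat2 set set" where
  "Sig_R n f = (\<Union>j\<in>{1..n - 1}. cone ({real j<..<real j + 1} \<inter> \<rat>) (restrS (Cset f j)))
               \<union> cone ({real n<..} \<inter> \<rat>) (restrS (Cset f n))"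

definition Sig_C :: "nat \<Rightarrow> (nat \<Rightarrow> cpoly4) \<Rightarrow> complex mat2 set set" where
  "Sig_C n f = (\<Union>j\<in>{1..n}. cone {real j}
                   (sigma_img f j \<union> restrS (Cset f (j - 1) \<inter> Cset f j)))"

end

theory Submission
  imports Defs "HOL-Computational_Algebra.Formal_Power_Series"
begin

(*
  Write A = t^beta B0 + (lower terms) and let alpha be the leading exponent of A rescaled to
  determinant 1, so that det A has leading exponent 2 beta - 2 alpha (if det A = 0, any alpha will
  do).  The j-th summand of F_2n(A) then has leading exponent at most
  n (2 beta - 2 alpha) + 2 j alpha - j (j + 1), with coefficient lc(det A)^(n-j) f_2j(B0) there,
  and since the summands add up to zero these coefficients cancel where the exponent is maximal.
  In j the exponent is a concave parabola with vertex alpha - 1/2, so the maximum is attained at a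
  single j unless alpha is an integer k, where it is attained exactly at k - 1 and k.  As f_0 is a
  nonzero constant it cannot dominate alone; hence alpha >= 1, so det A has leading exponent below
  2 beta and det B0 = 0.  A unique maximum at k gives f_2k(B0) = 0, placing VAL(A) in
  Sigma_infinity or Sigma_R; a tie gives f_2k(B) = - f_2k-2(B) for the rescaled leading matrix B,
  i.e. sigma_k([B]) = [B], placing VAL(A) in Sigma_C.
*)

section \<open>Supports of Puiseux series\<close>

lemma Ints_mult_of_nat_right:
  fixes x :: rat
  assumes "x * of_nat N \<in> \<int>"
  shows "x * of_nat (N * M) \<in> \<int>"
proof -
  have "x * of_nat N * of_nat M \<in> \<int>" using Ints_mult[OF assms Ints_of_nat] .
  then show ?thesis by (simp add: mult.assoc)
qed

lemma rat_denominator_exists: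
  fixes s :: rat
  obtains m :: nat where "m \<ge> 1" "s * of_nat m \<in> \<int>"
proof -
  obtain p d where s: "s = of_int p / of_int d" and d: "d > 0"
    by (metis quotient_of_denom_pos quotient_of_div surj_pair)
  have "s * of_nat (nat d) = of_int p" using d unfolding s by simp
  then show ?thesis using d that[of "nat d"] by simp
qed

lemma puiseux_supp_subset:
  assumes "puiseux a" "puiseux b" and supp: "{q. x q \<noteq> 0} \<subseteq> {q. a q \<noteq> 0} \<union> {q. b q \<noteq> 0}"
  shows "puiseux x"
proof -
  obtain N1 where N1: "N1 \<ge> 1" "\<forall>q. a q \<noteq> 0 \<longrightarrow> q * of_nat N1 \<in> \<int>" "bdd_above {q. a q \<noteq> 0}"
    using assms(1) unfolding puiseux_def by blast
  obtain N2 where N2: "N2 \<ge> 1" "\<forall>q. b q \<noteq> 0 \<longrightarrow> q * of_nat N2 \<in> \<int>" "bdd_above {q. b q \<noteq> 0}"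
    using assms(2) unfolding puiseux_def by blast
  have "q * of_nat (N1 * N2) \<in> \<int>" if "x q \<noteq> 0" for q
    using supp that N1(2) N2(2) Ints_mult_of_nat_right[of q N2 N1] Ints_mult_of_nat_right[of q N1 N2]
    by (auto simp: mult.commute)
  moreover have "bdd_above {q. x q \<noteq> 0}"
    using supp N1(3) N2(3) by (meson bdd_above_Un bdd_above_mono)
  ultimately show ?thesis using N1(1) N2(1) unfolding puiseux_def by (intro conjI exI[of _ "N1 * N2"]) auto
qed

lemma conv_nonzero_split:
  assumes "conv a b q \<noteq> 0"
  obtains r where "a r \<noteq> 0" "b (q - r) \<noteq> 0"
proof -
  have "{r. a r \<noteq> 0 \<and> b (q - r) \<noteq> 0} \<noteq> {}"
  proof
    assume "{r. a r \<noteq> 0 \<and> b (q - r) \<noteq> 0} = {}"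
    then have "conv a b q = 0" unfolding conv_def by (simp only: sum.empty)
    then show False using assms by simp
  qed
  then show ?thesis using that by blast
qed

lemma puiseux_conv:
  assumes "puiseux a" "puiseux b"
  shows "puiseux (conv a b)"
proof -
  obtain N1 M1 where N1: "N1 \<ge> 1" "\<forall>q. a q \<noteq> 0 \<longrightarrow> q * of_nat N1 \<in> \<int>" "\<forall>q. a q \<noteq> 0 \<longrightarrow> q \<le> M1"
    using assms(1) unfolding puiseux_def bdd_above_def by auto
  obtain N2 M2 where N2: "N2 \<ge> 1" "\<forall>q. b q \<noteq> 0 \<longrightarrow> q * of_nat N2 \<in> \<int>" "\<forall>q. b q \<noteq> 0 \<longrightarrow> q \<le> M2"
    using assms(2) unfolding puiseux_def bdd_above_def by auto
  have "q * of_nat (N1 * N2) \<in> \<int> \<and> q \<le> M1 + M2" if q: "conv a b q \<noteq> 0" for q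
  proof -
    obtain r where r: "a r \<noteq> 0" "b (q - r) \<noteq> 0" by (rule conv_nonzero_split[OF q])
    have "r * of_nat (N1 * N2) + (q - r) * of_nat (N2 * N1) \<in> \<int>"
      using r N1(2) N2(2) by (intro Ints_add Ints_mult_of_nat_right) auto
    moreover have "r \<le> M1" "q - r \<le> M2" using r N1(3) N2(3) by auto
    ultimately show ?thesis by (simp add: algebra_simps)
  qed
  then show ?thesis using N1(1) N2(1) unfolding puiseux_def bdd_above_def
    by (intro conjI exI[of _ "N1 * N2"] exI[of _ "M1 + M2"]) auto
qed

lemma puiseux_top_exponent:
  assumes "puiseux a" "a \<noteq> pzero"
  obtains m where "a m \<noteq> 0" "\<forall>q>m. a q = 0"
proof -
  obtain N M where N: "N \<ge> 1" "\<forall>q. a q \<noteq> 0 \<longrightarrow> q * of_nat N \<in> \<int>" and M: "\<forall>q. a q \<noteq> 0 \<longrightarrow> q \<le> M"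
    using assms(1) unfolding puiseux_def bdd_above_def by auto
  obtain q0 where q0: "a q0 \<noteq> 0" using assms(2) unfolding pzero_def by auto
  define F where "F = {q. a q \<noteq> 0 \<and> q0 \<le> q}"
  have "F \<subseteq> (\<lambda>k. of_int k / of_nat N) ` {\<lfloor>q0 * of_nat N\<rfloor>..\<lfloor>M * of_nat N\<rfloor>}"
  proof
    fix q assume q: "q \<in> F"
    then obtain k where k: "q * of_nat N = of_int k" using N(2) unfolding F_def by (auto elim: Ints_cases)
    have "q0 * of_nat N \<le> of_int k" "of_int k \<le> M * of_nat N"
      using q M unfolding F_def k[symmetric] by (auto intro: mult_right_mono)
    then have "k \<in> {\<lfloor>q0 * of_nat N\<rfloor>..\<lfloor>M * of_nat N\<rfloor>}" by (simp add: le_floor_iff floor_le_iff)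
    moreover have "q = of_int k / of_nat N" using k N(1) by (simp add: eq_divide_eq)
    ultimately show "q \<in> (\<lambda>k. of_int k / of_nat N) ` {\<lfloor>q0 * of_nat N\<rfloor>..\<lfloor>M * of_nat N\<rfloor>}" by blast
  qed
  then have "finite F" by (rule finite_subset) simp
  moreover have "q0 \<in> F" using q0 unfolding F_def by simp
  ultimately have max: "Max F \<in> F" "\<And>q. q \<in> F \<Longrightarrow> q \<le> Max F"
    by (auto intro!: Max_in Max_ge)
  have "a q = 0" if "q > Max F" for q
  proof (rule ccontr)
    assume "a q \<noteq> 0"
    moreover have "q0 \<le> q" using max(1) that unfolding F_def by auto
    ultimately show False using max(2)[of q] that unfolding F_def by auto
  qed
  moreover have "a (Max F) \<noteq> 0" using max(1) unfolding F_def by auto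
  ultimately show ?thesis using that by blast
qed

section \<open>Leading terms\<close>

(* v may be 0, in which case s is only an upper bound for the leading exponent of x. *)
definition top_term :: "ps \<Rightarrow> rat \<Rightarrow> complex \<Rightarrow> bool" where
  "top_term x s v \<longleftrightarrow> (\<forall>q>s. x q = 0) \<and> x s = v"

definition coeff_mat :: "ps mat2 \<Rightarrow> rat \<Rightarrow> complex mat2" where
  "coeff_mat A q = map_mat2 (\<lambda>x. x q) A"

lemma coeff_mat_M2 [simp]: "coeff_mat (M2 a b c d) q = M2 (a q) (b q) (c q) (d q)"
  by (simp add: coeff_mat_def)

lemma M2_eq_czero_iff [simp]: "M2 a b c d = czero \<longleftrightarrow> a = 0 \<and> b = 0 \<and> c = 0 \<and> d = 0"
  by (auto simp: czero_def)

lemma top_term_tpow: "top_term (tpow s) s 1"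
  by (simp add: top_term_def tpow_def)

lemma top_term_pzero: "top_term pzero s 0"
  by (simp add: top_term_def pzero_def)

lemma top_term_conv:
  assumes a: "top_term a s1 v1" and b: "top_term b s2 v2"
  shows "top_term (conv a b) (s1 + s2) (v1 * v2)"
proof -
  have supp: "{r. a r \<noteq> 0 \<and> b (q - r) \<noteq> 0} \<subseteq> {r. r \<le> s1 \<and> q - r \<le> s2}" for q
    using a b unfolding top_term_def by (auto simp: not_le[symmetric])
  have "conv a b q = 0" if "q > s1 + s2" for q
  proof -
    have "{r. a r \<noteq> 0 \<and> b (q - r) \<noteq> 0} = {}" using supp[of q] that by fastforce
    then show ?thesis unfolding conv_def by (simp only: sum.empty)
  qed
  moreover have "conv a b (s1 + s2) = (\<Sum>r\<in>{s1}. a r * b (s1 + s2 - r))"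
    unfolding conv_def using supp[of "s1 + s2"] by (intro sum.mono_neutral_left) auto
  ultimately show ?thesis using a b unfolding top_term_def by simp
qed

lemma top_term_ppow: "top_term x s v \<Longrightarrow> top_term (ppow x m) (of_nat m * s) (v ^ m)"
proof (induction m)
  case 0
  then show ?case using top_term_tpow by simp
next
  case (Suc m)
  then have "top_term (conv x (ppow x m)) (s + of_nat m * s) (v * v ^ m)"
    by (intro top_term_conv)
  then show ?case by (simp add: algebra_simps)
qed

lemma top_term_entries:
  assumes "\<forall>q>s. coeff_mat (M2 a b c d) q = czero"
  shows "top_term a s (a s)" "top_term b s (b s)" "top_term c s (c s)" "top_term d s (d s)"
  using assms by (auto simp: top_term_def)

lemma top_term_Kdet:
  assumes "\<forall>q>s. coeff_mat A q = czero"
  shows "top_term (Kdet A) (2 * s) (cdet (coeff_mat A s))"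
proof (cases A)
  case (M2 a b c d)
  note entries = top_term_entries[OF assms[unfolded M2]]
  have "top_term (conv a d) (s + s) (a s * d s)" "top_term (conv b c) (s + s) (b s * c s)"
    by (rule top_term_conv[OF entries(1,4)], rule top_term_conv[OF entries(2,3)])
  then show ?thesis unfolding M2 mult_2 top_term_def by simp
qed

lemma cdet_coeff_mat_eq_0:
  assumes "\<forall>q>s. coeff_mat A q = czero" "top_term (Kdet A) \<delta> d" "\<delta> < 2 * s"
  shows "cdet (coeff_mat A s) = 0"
  using top_term_Kdet[OF assms(1)] assms(2,3) unfolding top_term_def by simp

lemma top_term_sum:
  assumes terms: "\<And>j. j \<in> J \<Longrightarrow> top_term (T j) (E j) (c j)"
    and le: "\<And>j. j \<in> J \<Longrightarrow> E j \<le> s"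
  shows "top_term (\<lambda>q. \<Sum>j\<in>J. T j q) s (\<Sum>j\<in>J. if E j = s then c j else 0)"
  unfolding top_term_def
proof (intro conjI allI impI)
  fix q assume "q > s"
  then have "T j q = 0" if "j \<in> J" for j
    using terms[OF that] le[OF that] unfolding top_term_def by auto
  then show "(\<Sum>j\<in>J. T j q) = 0" by simp
next
  show "(\<Sum>j\<in>J. T j s) = (\<Sum>j\<in>J. if E j = s then c j else 0)"
  proof (rule sum.cong[OF refl])
    fix j assume j: "j \<in> J"
    show "T j s = (if E j = s then c j else 0)"
      using terms[OF j] le[OF j] unfolding top_term_def by (cases "E j = s") auto
  qed
qed

lemma top_term_evalK:
  assumes "homog p deg" and "\<forall>q>s. coeff_mat A q = czero"
  shows "top_term (evalK p A) (of_nat deg * s) (evalC p (coeff_mat A s))"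
proof (cases A)
  case (M2 a b c d)
  note entries = top_term_entries[OF assms(2)[unfolded M2]]
  have monomial: "top_term (conv (conv (ppow a i) (ppow b j)) (conv (ppow c k) (ppow d l)))
      (of_nat deg * s) (a s ^ i * b s ^ j * c s ^ k * d s ^ l)"
    if "p (i, j, k, l) \<noteq> 0" for i j k l
  proof -
    have "i + j + k + l = deg" using assms(1) that unfolding homog_def by blast
    then have "(of_nat i * s + of_nat j * s) + (of_nat k * s + of_nat l * s) = of_nat deg * s"
      by (auto simp: algebra_simps)
    moreover have "top_term (conv (conv (ppow a i) (ppow b j)) (conv (ppow c k) (ppow d l)))
        ((of_nat i * s + of_nat j * s) + (of_nat k * s + of_nat l * s))
        ((a s ^ i * b s ^ j) * (c s ^ k * d s ^ l))"
      by (intro top_term_conv top_term_ppow entries)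
    ultimately show ?thesis by (simp add: mult.assoc)
  qed
  have "top_term (\<lambda>q. p e * (case e of (i, j, k, l) \<Rightarrow>
          conv (conv (ppow a i) (ppow b j)) (conv (ppow c k) (ppow d l)) q))
      (of_nat deg * s) (p e * (case e of (i, j, k, l) \<Rightarrow> a s ^ i * b s ^ j * c s ^ k * d s ^ l))"
    if "e \<in> {e. p e \<noteq> 0}" for e
    using monomial[of "fst e" "fst (snd e)" "fst (snd (snd e))" "snd (snd (snd e))"] that
    by (auto simp: top_term_def split: prod.splits)
  from top_term_sum[of "{e. p e \<noteq> 0}", OF this order.refl]
  show ?thesis unfolding M2 by simp
qed

section \<open>Inverse square roots of Puiseux series\<close>

(* ps_of_fps N s g is the Puiseux series t^s g(t^(-1/N)). *)
definition ps_of_fps :: "nat \<Rightarrow> rat \<Rightarrow> complex fps \<Rightarrow> ps" where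
  "ps_of_fps N s g =
     (\<lambda>q. if (s - q) * of_nat N \<in> \<nat> then fps_nth g (nat \<lfloor>(s - q) * of_nat N\<rfloor>) else 0)"

lemma ps_of_fps_at:
  assumes "N \<ge> 1"
  shows "ps_of_fps N s g (s - of_nat k / of_nat N) = fps_nth g k"
proof -
  have "(s - (s - of_nat k / of_nat N)) * of_nat N = (of_nat k :: rat)" using assms by simp
  then show ?thesis unfolding ps_of_fps_def by simp
qed

lemma ps_of_fps_support:
  fixes s q :: rat
  assumes "N \<ge> 1" "(s - q) * of_nat N \<in> \<nat>"
  obtains k where "q = s - of_nat k / of_nat N"
proof -
  have Nr: "(of_nat N :: rat) \<noteq> 0" using assms(1) by simp
  obtain k where "(s - q) * of_nat N = of_nat k" using assms(2) by (auto elim: Nats_cases)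
  then have "s - q = of_nat k / of_nat N" by (rule nonzero_eq_divide_eq[OF Nr, THEN iffD2])
  then have "q = s - of_nat k / of_nat N" by simp
  then show ?thesis by (rule that)
qed

lemma ps_of_fps_nonzero:
  assumes "N \<ge> 1" "ps_of_fps N s g q \<noteq> 0"
  obtains k where "q = s - of_nat k / of_nat N"
  using assms ps_of_fps_support unfolding ps_of_fps_def by (metis (full_types))

lemma puiseux_ps_of_fps:
  assumes "N \<ge> 1"
  shows "puiseux (ps_of_fps N s g)"
proof -
  obtain m where m: "m \<ge> 1" "s * of_nat m \<in> \<int>" by (rule rat_denominator_exists)
  have Nr: "(of_nat N :: rat) \<noteq> 0" using assms by simp
  have "q * of_nat (m * N) \<in> \<int> \<and> q \<le> s" if nz: "ps_of_fps N s g q \<noteq> 0" for q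
  proof -
    obtain k where k: "q = s - of_nat k / of_nat N" using ps_of_fps_nonzero[OF assms nz] .
    have "q * of_nat (m * N) = s * of_nat m * of_nat N - of_nat (m * k)"
      using Nr unfolding k by (simp add: algebra_simps)
    then show ?thesis using m(2) unfolding k by simp
  qed
  then show ?thesis using m(1) assms unfolding puiseux_def bdd_above_def
    by (intro conjI exI[of _ "m * N"] exI[of _ s]) auto
qed

lemma conv_ps_of_fps:
  assumes N: "N \<ge> 1"
  shows "conv (ps_of_fps N s1 g1) (ps_of_fps N s2 g2) = ps_of_fps N (s1 + s2) (g1 * g2)"
proof
  fix q
  let ?x = "ps_of_fps N s1 g1" and ?y = "ps_of_fps N s2 g2"
  let ?X = "{r. ?x r \<noteq> 0 \<and> ?y (q - r) \<noteq> 0}"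
  have Nr: "(of_nat N :: rat) \<noteq> 0" using N by simp
  have split: "\<exists>i j. r = s1 - of_nat i / of_nat N \<and> q - r = s2 - of_nat j / of_nat N" if "r \<in> ?X" for r
    using that by (auto elim!: ps_of_fps_nonzero[OF N])
  show "conv ?x ?y q = ps_of_fps N (s1 + s2) (g1 * g2) q"
  proof (cases "(s1 + s2 - q) * of_nat N \<in> \<nat>")
    case False
    have X: "?X = {}"
    proof (rule ccontr)
      assume "?X \<noteq> {}"
      then obtain x where "x \<in> ?X" by blast
      then obtain i j where ij: "x = s1 - of_nat i / of_nat N" "q - x = s2 - of_nat j / of_nat N"
        using split by blast
      have "s1 - x = of_nat i / of_nat N" "s2 - (q - x) = of_nat j / of_nat N" using ij by simp_all
      then have "s1 + s2 - q = of_nat (i + j) / of_nat N" by (simp add: add_divide_distrib)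
      then have "(s1 + s2 - q) * of_nat N = of_nat (i + j)" using Nr by simp
      then show False using False by simp
    qed
    show ?thesis using False unfolding conv_def X ps_of_fps_def[of N "s1 + s2"] by simp
  next
    case True
    then obtain m where qm: "q = s1 + s2 - of_nat m / of_nat N" by (rule ps_of_fps_support[OF N])
    define r where "r i = s1 - of_nat i / of_nat N" for i :: nat
    have inj: "inj_on r {0..m}" unfolding r_def inj_on_def using Nr by (auto simp: field_simps)
    have q_minus_r: "q - r i = s2 - of_nat (m - i) / of_nat N" if "i \<le> m" for i
      using that Nr unfolding qm r_def by (simp add: of_nat_diff field_simps)
    have "?X \<subseteq> r ` {0..m}"
    proof
      fix x assume "x \<in> ?X"
      then obtain i j where ij: "x = s1 - of_nat i / of_nat N" "q - x = s2 - of_nat j / of_nat N"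
        using split by blast
      then have "(of_nat m :: rat) = of_nat (i + j)" using qm Nr by (simp add: field_simps)
      then have "m = i + j" by (simp only: of_nat_eq_iff)
      then show "x \<in> r ` {0..m}" using ij unfolding r_def by auto
    qed
    then have "conv ?x ?y q = (\<Sum>x\<in>r ` {0..m}. ?x x * ?y (q - x))"
      unfolding conv_def by (intro sum.mono_neutral_left) auto
    also have "\<dots> = (\<Sum>i\<in>{0..m}. ?x (r i) * ?y (q - r i))"
      by (rule sum.reindex[OF inj, unfolded comp_def])
    also have "\<dots> = (\<Sum>i\<in>{0..m}. fps_nth g1 i * fps_nth g2 (m - i))"
    proof (rule sum.cong[OF refl])
      fix i assume "i \<in> {0..m}"
      then have "q - r i = s2 - of_nat (m - i) / of_nat N" by (intro q_minus_r) simp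
      then show "?x (r i) * ?y (q - r i) = fps_nth g1 i * fps_nth g2 (m - i)"
        unfolding r_def by (simp only: ps_of_fps_at[OF N])
    qed
    also have "\<dots> = ps_of_fps N (s1 + s2) (g1 * g2) q"
      unfolding qm ps_of_fps_at[OF N] by (simp add: fps_mult_nth)
    finally show ?thesis .
  qed
qed

lemma ps_of_fps_one:
  assumes "N \<ge> 1"
  shows "ps_of_fps N 0 1 = tpow 0"
proof
  fix q
  show "ps_of_fps N 0 1 q = tpow 0 q"
  proof (cases "(0 - q) * of_nat N \<in> \<nat>")
    case True
    then obtain k where k: "q = 0 - of_nat k / of_nat N" by (rule ps_of_fps_support[OF assms])
    then show ?thesis using assms unfolding k ps_of_fps_at[OF assms] by (simp add: tpow_def)
  next
    case False
    then show ?thesis unfolding ps_of_fps_def tpow_def by auto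
  qed
qed

lemma ps_of_fps_expansion:
  assumes N: "N \<ge> 1" "\<forall>q. D q \<noteq> 0 \<longrightarrow> q * of_nat N \<in> \<int>"
    and top: "\<forall>q>\<delta>. D q = 0" "\<delta> * of_nat N \<in> \<int>"
  shows "D = ps_of_fps N \<delta> (Abs_fps (\<lambda>k. D (\<delta> - of_nat k / of_nat N)))"
proof
  fix q
  show "D q = ps_of_fps N \<delta> (Abs_fps (\<lambda>k. D (\<delta> - of_nat k / of_nat N))) q"
  proof (cases "(\<delta> - q) * of_nat N \<in> \<nat>")
    case True
    then obtain k where "q = \<delta> - of_nat k / of_nat N" by (rule ps_of_fps_support[OF N(1)])
    then show ?thesis using ps_of_fps_at[OF N(1)] by simp
  next
    case False
    have "D q = 0"
    proof (rule ccontr)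
      assume Dq: "D q \<noteq> 0"
      then have "(\<delta> - q) * of_nat N \<in> \<int>"
        using N(2) top(2) Ints_diff[of "\<delta> * of_nat N" "q * of_nat N"] by (simp add: algebra_simps)
      moreover have "q \<le> \<delta>" using Dq top(1) by (meson not_le)
      ultimately have "(\<delta> - q) * of_nat N \<in> \<nat>" by (metis Ints_cases diff_ge_0_iff_ge
            mult_nonneg_nonneg of_int_0_le_iff of_nat_0_le_iff nonneg_int_cases of_int_of_nat_eq of_nat_in_Nats)
      then show False using False by simp
    qed
    then show ?thesis using False unfolding ps_of_fps_def by simp
  qed
qed

lemma puiseux_inverse_sqrt:
  assumes "puiseux D" "D \<noteq> pzero"
  shows "\<exists>l. puiseux l \<and> conv (conv l l) D = tpow 0"
proof -
  obtain N where N: "N \<ge> 1" "\<forall>q. D q \<noteq> 0 \<longrightarrow> q * of_nat N \<in> \<int>"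
    using assms(1) unfolding puiseux_def by blast
  obtain \<delta> where \<delta>: "D \<delta> \<noteq> 0" "\<forall>q>\<delta>. D q = 0" by (rule puiseux_top_exponent[OF assms])
  define h where "h = Abs_fps (\<lambda>k. D (\<delta> - of_nat k / of_nat N))"
  have D: "D = ps_of_fps N \<delta> h"
    unfolding h_def using N \<delta> by (intro ps_of_fps_expansion) auto
  have h0: "fps_nth h 0 \<noteq> 0" unfolding h_def using \<delta> by simp
  define r where "r = fps_radical (\<lambda>_ x. csqrt x) 2 (inverse h)"
  have "r ^ 2 = inverse h"
    unfolding r_def numeral_2_eq_2 using h0
    by (subst power_radical[symmetric]) (simp_all add: power2_csqrt[unfolded power2_eq_square])
  then have rrh: "r * r * h = 1" using inverse_mult_eq_1[OF h0] by (simp add: power2_eq_square)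
  define l where "l = ps_of_fps N (- \<delta> / 2) r"
  have "conv (conv l l) D = ps_of_fps N 0 (r * r * h)"
    unfolding l_def D by (simp add: conv_ps_of_fps[OF N(1)])
  then have "conv (conv l l) D = tpow 0" unfolding rrh ps_of_fps_one[OF N(1)] .
  moreover have "puiseux l" unfolding l_def by (rule puiseux_ps_of_fps[OF N(1)])
  ultimately show ?thesis by blast
qed

section \<open>Leading matrices and the valuation map\<close>

lemma csmult_M2 [simp]: "csmult z (M2 a b c d) = M2 (z * a) (z * b) (z * c) (z * d)"
  by (simp add: csmult_def)

lemma csmult_eq_czero_iff: "csmult z B = czero \<longleftrightarrow> z = 0 \<or> B = czero"
  by (cases B) auto

lemma cdet_csmult: "cdet (csmult z B) = z ^ 2 * cdet B"
  by (cases B) (simp add: power2_eq_square algebra_simps)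

lemma lexp_eqI:
  assumes "\<forall>q>\<beta>. coeff_mat A q = czero" "coeff_mat A \<beta> \<noteq> czero"
  shows "lexp A = \<beta>"
  unfolding lexp_def
proof (rule Greatest_equality)
  show "\<exists>x\<in>set (ents A). x \<beta> \<noteq> 0" using assms(2) by (cases A) auto
next
  fix q assume "\<exists>x\<in>set (ents A). x q \<noteq> 0"
  then show "q \<le> \<beta>" using assms(1) by (cases A) (auto simp: not_le[symmetric])
qed

lemma Kmat_top_exponent:
  assumes "Kmat A"
  obtains \<beta> where "\<forall>q>\<beta>. coeff_mat A q = czero" "coeff_mat A \<beta> \<noteq> czero"
proof (cases A)
  case (M2 a b c d)
  have P: "puiseux a" "puiseux b" "puiseux c" "puiseux d" using assms unfolding M2 Kmat_def by auto
  define u :: ps where "u q = (if coeff_mat A q = czero then 0 else 1)" for q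
  have "puiseux (\<lambda>q. if a q = 0 \<and> b q = 0 then 0 else 1)" "puiseux (\<lambda>q. if c q = 0 \<and> d q = 0 then 0 else 1)"
    by (auto intro: puiseux_supp_subset[OF P(1,2)] puiseux_supp_subset[OF P(3,4)])
  then have "puiseux u" unfolding u_def M2 by (rule puiseux_supp_subset) auto
  moreover have "u \<noteq> pzero"
    using assms unfolding u_def M2 Kmat_def pzero_def by (auto simp: fun_eq_iff)
  ultimately obtain \<beta> where "u \<beta> \<noteq> 0" "\<forall>q>\<beta>. u q = 0" by (rule puiseux_top_exponent)
  then show ?thesis using that unfolding u_def by (auto split: if_splits)
qed

lemma puiseux_Kdet:
  assumes "Kmat A"
  shows "puiseux (Kdet A)"
proof (cases A)
  case (M2 a b c d)
  then have "puiseux a" "puiseux b" "puiseux c" "puiseux d" using assms unfolding Kmat_def by auto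
  then have "puiseux (conv a d)" "puiseux (conv b c)" by (auto intro: puiseux_conv)
  then show ?thesis unfolding M2 by (rule puiseux_supp_subset) auto
qed

lemma coeff_mat_conv_scale:
  assumes "top_term l \<gamma> g" and "\<forall>q>\<beta>. coeff_mat A q = czero"
  shows "\<forall>q>\<gamma> + \<beta>. coeff_mat (map_mat2 (conv l) A) q = czero"
    and "coeff_mat (map_mat2 (conv l) A) (\<gamma> + \<beta>) = csmult g (coeff_mat A \<beta>)"
proof -
  obtain a b c d where A: "A = M2 a b c d" by (cases A)
  have "top_term (conv l x) (\<gamma> + \<beta>) (g * x \<beta>)" if "top_term x \<beta> (x \<beta>)" for x
    using top_term_conv[OF assms(1) that] .
  then have "top_term (conv l a) (\<gamma> + \<beta>) (g * a \<beta>)" "top_term (conv l b) (\<gamma> + \<beta>) (g * b \<beta>)"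
    "top_term (conv l c) (\<gamma> + \<beta>) (g * c \<beta>)" "top_term (conv l d) (\<gamma> + \<beta>) (g * d \<beta>)"
    using top_term_entries[OF assms(2)[unfolded A]] by auto
  then show "\<forall>q>\<gamma> + \<beta>. coeff_mat (map_mat2 (conv l) A) q = czero"
    and "coeff_mat (map_mat2 (conv l) A) (\<gamma> + \<beta>) = csmult g (coeff_mat A \<beta>)"
    unfolding A top_term_def by auto
qed

definition cone_point :: "real \<Rightarrow> complex mat2 \<Rightarrow> complex mat2 set" where
  "cone_point \<alpha> B = cproj (cadd (csmult (complex_of_real (exp \<alpha>)) B)
                                (csmult (complex_of_real (exp (- \<alpha>))) (cstar (adjc B))))"

lemma VAL_singular:
  assumes "Kdet A = pzero" "\<forall>q>\<beta>. coeff_mat A q = czero" "coeff_mat A \<beta> \<noteq> czero"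
  shows "VAL A = cproj (coeff_mat A \<beta>)"
  using assms lexp_eqI[OF assms(2,3)] unfolding VAL_def lead_def coeff_mat_def by simp

lemma VAL_nonsingular:
  assumes "Kmat A" "Kdet A \<noteq> pzero" "\<forall>q>\<beta>. coeff_mat A q = czero" "coeff_mat A \<beta> \<noteq> czero"
  obtains \<alpha> d0 g where "d0 \<noteq> 0" "g * g * d0 = 1" "top_term (Kdet A) (2 * \<beta> - 2 * \<alpha>) d0"
    "VAL A = cone_point (real_of_rat \<alpha>) (csmult g (coeff_mat A \<beta>))"
proof -
  obtain \<delta> where \<delta>: "Kdet A \<delta> \<noteq> 0" "\<forall>q>\<delta>. Kdet A q = 0"
    using puiseux_top_exponent[OF puiseux_Kdet[OF assms(1)] assms(2)] .
  define d0 where "d0 = Kdet A \<delta>"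
  have D: "top_term (Kdet A) \<delta> d0" using \<delta> unfolding top_term_def d0_def by simp
  define l where "l = (SOME l. puiseux l \<and> conv (conv l l) (Kdet A) = tpow 0)"
  have l: "puiseux l" "conv (conv l l) (Kdet A) = tpow 0"
    using someI_ex[OF puiseux_inverse_sqrt[OF puiseux_Kdet[OF assms(1)] assms(2)]]
    unfolding l_def by auto
  have "l \<noteq> pzero"
  proof
    assume "l = pzero"
    then have "conv (conv l l) (Kdet A) 0 = 0" by (simp add: conv_def pzero_def)
    then show False using l(2) by (simp add: tpow_def)
  qed
  then obtain \<gamma> where \<gamma>: "l \<gamma> \<noteq> 0" "\<forall>q>\<gamma>. l q = 0" using puiseux_top_exponent[OF l(1)] by blast
  define g where "g = l \<gamma>"
  have L: "top_term l \<gamma> g" using \<gamma> unfolding top_term_def g_def by simp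
  have "top_term (tpow 0) (\<gamma> + \<gamma> + \<delta>) (g * g * d0)"
    using top_term_conv[OF top_term_conv[OF L L] D] unfolding l(2) .
  moreover have "g * g * d0 \<noteq> 0" using \<gamma> \<delta> unfolding g_def d0_def by simp
  ultimately have "\<gamma> + \<gamma> + \<delta> = 0" and ggd0: "g * g * d0 = 1"
    unfolding top_term_def tpow_def by (auto split: if_splits)
  then have "\<delta> = 2 * \<beta> - 2 * (\<gamma> + \<beta>)" by simp
  then have D': "top_term (Kdet A) (2 * \<beta> - 2 * (\<gamma> + \<beta>)) d0" using D by simp
  have "csmult g (coeff_mat A \<beta>) \<noteq> czero"
    using assms(4) \<gamma> unfolding g_def by (simp add: csmult_eq_czero_iff)
  then have "lexp (map_mat2 (conv l) A) = \<gamma> + \<beta>"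
    using coeff_mat_conv_scale[OF L assms(3)] by (intro lexp_eqI) auto
  then have "VAL A = cone_point (real_of_rat (\<gamma> + \<beta>)) (csmult g (coeff_mat A \<beta>))"
    using assms(2) coeff_mat_conv_scale(2)[OF L assms(3)]
    unfolding VAL_def Let_def l_def[symmetric] lead_def cone_point_def coeff_mat_def by simp
  then show ?thesis using that \<delta> ggd0 D' unfolding d0_def by blast
qed

lemma evalC_csmult:
  assumes "homog p deg"
  shows "evalC p (csmult z B) = z ^ deg * evalC p B"
proof (cases B)
  case (M2 a b c d)
  have "p e * (case e of (i, j, k, l) \<Rightarrow> (z * a) ^ i * (z * b) ^ j * (z * c) ^ k * (z * d) ^ l) =
      z ^ deg * (p e * (case e of (i, j, k, l) \<Rightarrow> a ^ i * b ^ j * c ^ k * d ^ l))"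
    if "p e \<noteq> 0" for e
  proof (cases e)
    case (fields i j k l)
    then have "z ^ deg = z ^ i * z ^ j * z ^ k * z ^ l"
      using assms that unfolding homog_def by (metis power_add)
    then show ?thesis unfolding fields by (simp add: power_mult_distrib mult_ac)
  qed
  then have "evalC p (csmult z B) =
      (\<Sum>e\<in>{e. p e \<noteq> 0}. z ^ deg * (p e * (case e of (i, j, k, l) \<Rightarrow> a ^ i * b ^ j * c ^ k * d ^ l)))"
    unfolding M2 csmult_M2 evalC.simps by (intro sum.cong) auto
  then show ?thesis unfolding M2 by (simp add: sum_distrib_left)
qed

lemma evalC_degree_0_nonzero:
  assumes "homog p 0" "\<not> det_dvd p"
  shows "evalC p B \<noteq> 0"
proof -
  have supp: "{e. p e \<noteq> 0} \<subseteq> {(0, 0, 0, 0)}" using assms(1) unfolding homog_def by auto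
  have "p (0, 0, 0, 0) \<noteq> 0"
  proof
    assume "p (0, 0, 0, 0) = 0"
    then have "\<forall>e. p e = detmul (\<lambda>_. 0) e" using supp by auto
    then have "det_dvd p" unfolding det_dvd_def by (intro exI[of _ "\<lambda>_. 0"]) simp
    then show False using assms(2) by contradiction
  qed
  then have "{e. p e \<noteq> 0} = {(0, 0, 0, 0)}" using supp by auto
  then show ?thesis using \<open>p (0, 0, 0, 0) \<noteq> 0\<close> by (cases B) simp
qed

lemma cproj_notin_Cset:
  assumes "homog (f j) deg" "evalC (f j) B \<noteq> 0"
  shows "cproj B \<notin> Cset f j"
proof
  assume "cproj B \<in> Cset f j"
  then obtain B' where B': "cproj B = cproj B'" "evalC (f j) B' = 0" unfolding Cset_def by blast
  have "B \<in> cproj B" unfolding cproj_def by (cases B) (auto intro: exI[of _ 1])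
  then obtain z where "B = csmult z B'" using B'(1) unfolding cproj_def by auto
  then show False using B'(2) assms evalC_csmult[OF assms(1)] by simp
qed

lemma cone_point_in_cone:
  assumes "\<alpha> \<in> I" "B \<noteq> czero" "rproj B \<in> T"
  shows "cone_point \<alpha> B \<in> cone I T"
  using assms unfolding cone_point_def cone_def by blast

lemma rproj_in_restrS_Cset:
  assumes "B \<noteq> czero" "cdet B = 0" "evalC (f j) B = 0"
  shows "rproj B \<in> restrS (Cset f j)"
  using assms unfolding restrS_def Cset_def by blast

lemma cone_point_in_Sig_R:
  assumes B: "B \<noteq> czero" "cdet B = 0" "evalC (f k) B = 0"
    and k: "1 \<le> k" "k \<le> n"
    and \<alpha>: "\<alpha> \<in> \<rat>" "real k < \<alpha>" "k < n \<Longrightarrow> \<alpha> < real k + 1"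
  shows "cone_point \<alpha> B \<in> Sig_R n f"
proof (cases "k < n")
  case True
  then have "cone_point \<alpha> B \<in> cone ({real k<..<real k + 1} \<inter> \<rat>) (restrS (Cset f k))"
    using \<alpha> B by (intro cone_point_in_cone rproj_in_restrS_Cset) auto
  then show ?thesis using True k unfolding Sig_R_def by auto
next
  case False
  then have "cone_point \<alpha> B \<in> cone ({real n<..} \<inter> \<rat>) (restrS (Cset f n))"
    using \<alpha> B k by (intro cone_point_in_cone rproj_in_restrS_Cset) auto
  then show ?thesis unfolding Sig_R_def by auto
qed

lemma cone_point_in_Sig_C:
  assumes B: "B \<noteq> czero" "cdet B = 0"
    and k: "1 \<le> k" "k \<le> n"
    and hom: "homog (f (k - 1)) deg" "homog (f k) deg'"
    and rel: "evalC (f k) B = - evalC (f (k - 1)) B"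
  shows "cone_point (real k) B \<in> Sig_C n f"
proof -
  have "rproj B \<in> sigma_img f k \<union> restrS (Cset f (k - 1) \<inter> Cset f k)"
  proof (cases "evalC (f (k - 1)) B = 0")
    case True
    then show ?thesis using B rel unfolding restrS_def Cset_def by auto
  next
    case False
    then have "cproj B \<notin> Cset f (k - 1)" "cproj B \<notin> Cset f k"
      using rel cproj_notin_Cset[of f "k - 1", OF hom(1)] cproj_notin_Cset[of f k, OF hom(2)] by auto
    moreover have "sigma f k B = rproj B"
      using False rel unfolding sigma_def by (cases B) (simp add: csmult_def)
    moreover have "cproj B \<in> Qset" using B unfolding Qset_def by blast
    ultimately show ?thesis using B(1) unfolding sigma_img_def by blast
  qed
  then have "cone_point (real k) B \<in> cone {real k} (sigma_img f k \<union> restrS (Cset f (k - 1) \<inter> Cset f k))"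
    using B(1) by (intro cone_point_in_cone) auto
  then show ?thesis using k unfolding Sig_C_def by auto
qed

section \<open>Dominant summands of the surface equation\<close>

definition summand_exponent :: "rat \<Rightarrow> nat \<Rightarrow> rat" where
  "summand_exponent \<alpha> j = 2 * of_nat j * \<alpha> - of_nat j * (of_nat j + 1)"

lemma summand_exponent_less:
  assumes "j \<noteq> k"
    and "j < k \<Longrightarrow> of_nat j + of_nat k + 1 < 2 * \<alpha>"
    and "k < j \<Longrightarrow> 2 * \<alpha> < of_nat j + of_nat k + 1"
  shows "summand_exponent \<alpha> j < summand_exponent \<alpha> k"
proof -
  have "summand_exponent \<alpha> k - summand_exponent \<alpha> j
      = (of_nat k - of_nat j) * (2 * \<alpha> - of_nat j - of_nat k - 1)"
    unfolding summand_exponent_def by (simp add: algebra_simps)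
  moreover have "(of_nat k - of_nat j) * (2 * \<alpha> - of_nat j - of_nat k - 1) > (0 :: rat)"
  proof (cases "j < k")
    case True
    then show ?thesis using assms(2) by (intro mult_pos_pos) auto
  next
    case False
    then have "k < j" using assms(1) by simp
    then show ?thesis using assms(3) by (intro mult_neg_neg) auto
  qed
  ultimately show ?thesis by simp
qed

lemma summand_exponent_unique_max:
  assumes "j \<le> n" "k \<le> n" "j \<noteq> k"
    and "0 < k \<Longrightarrow> of_nat k < \<alpha>" and "k < n \<Longrightarrow> \<alpha> < of_nat k + 1"
  shows "summand_exponent \<alpha> j < summand_exponent \<alpha> k"
proof (rule summand_exponent_less)
  assume "j < k"
  then have "of_nat (j + 1) \<le> (of_nat k :: rat)" by simp
  then show "of_nat j + of_nat k + 1 < 2 * \<alpha>" using assms(4) \<open>j < k\<close> by simp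
next
  assume "k < j"
  then have "of_nat (k + 1) \<le> (of_nat j :: rat)" by simp
  then show "2 * \<alpha> < of_nat j + of_nat k + 1" using assms(1,5) \<open>k < j\<close> by simp
qed (use assms in simp)

lemma summand_exponent_tie:
  assumes "1 \<le> k"
  shows "summand_exponent (of_nat k) (k - 1) = summand_exponent (of_nat k) k"
  using assms unfolding summand_exponent_def by (simp add: of_nat_diff algebra_simps)

lemma summand_exponent_tie_max:
  assumes "j \<noteq> k" "j \<noteq> k - 1"
  shows "summand_exponent (of_nat k) j < summand_exponent (of_nat k) k"
proof (rule summand_exponent_less)
  assume "j < k"
  then have "of_nat (j + 2) \<le> (of_nat k :: rat)" using assms by simp
  then show "of_nat j + of_nat k + 1 < 2 * (of_nat k :: rat)" by simp
next
  assume "k < j"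
  then have "of_nat (k + 1) \<le> (of_nat j :: rat)" by simp
  then show "2 * of_nat k < of_nat j + of_nat k + (1 :: rat)" by simp
qed (use assms in simp)

lemma top_term_Fpoly_summand:
  assumes "homog (f j) (2 * j)" "j \<le> n"
    and "\<forall>q>\<beta>. coeff_mat A q = czero" "top_term (Kdet A) (2 * \<beta> - 2 * \<alpha>) d0"
  shows "top_term (conv (tpow (- of_nat (j * (j + 1)))) (conv (ppow (Kdet A) (n - j)) (evalK (f j) A)))
           (of_nat n * (2 * \<beta> - 2 * \<alpha>) + summand_exponent \<alpha> j)
           (d0 ^ (n - j) * evalC (f j) (coeff_mat A \<beta>))"
proof -
  have "top_term (conv (tpow (- of_nat (j * (j + 1)))) (conv (ppow (Kdet A) (n - j)) (evalK (f j) A)))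
      (- of_nat (j * (j + 1)) + (of_nat (n - j) * (2 * \<beta> - 2 * \<alpha>) + of_nat (2 * j) * \<beta>))
      (1 * (d0 ^ (n - j) * evalC (f j) (coeff_mat A \<beta>)))"
    by (intro top_term_conv top_term_tpow top_term_ppow top_term_evalK assms)
  moreover have "- of_nat (j * (j + 1)) + (of_nat (n - j) * (2 * \<beta> - 2 * \<alpha>) + of_nat (2 * j) * \<beta>)
      = of_nat n * (2 * \<beta> - 2 * \<alpha>) + summand_exponent \<alpha> j"
    using assms(2) unfolding summand_exponent_def by (simp add: of_nat_diff algebra_simps)
  ultimately show ?thesis by simp
qed

lemma tie_relation_rescaled:
  fixes g d0 u v :: complex
  assumes "g * g * d0 = 1" "1 \<le> k" "k \<le> n" "d0 ^ (n - k) * u + d0 ^ (n - k + 1) * v = 0"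
  shows "g ^ (2 * k) * u = - (g ^ (2 * (k - 1)) * v)"
proof -
  have "d0 \<noteq> 0" using assms(1) by auto
  have "d0 ^ (n - k) * (u + d0 * v) = 0" using assms(4) by (simp add: algebra_simps)
  then have u: "u = - (d0 * v)" using \<open>d0 \<noteq> 0\<close> by (simp add: add_eq_0_iff)
  have "2 * k = 2 * (k - 1) + 2" using assms(2) by simp
  then have "g ^ (2 * k) = g ^ (2 * (k - 1)) * (g * g)" by (simp add: power_add power2_eq_square)
  then have "g ^ (2 * k) * u = - (g ^ (2 * (k - 1)) * (g * g * d0) * v)" unfolding u by (simp add: algebra_simps)
  then show ?thesis using assms(1) by simp
qed

lemma dominant_index_exists:
  fixes \<alpha> :: rat
  assumes "1 \<le> \<alpha>" "1 \<le> n" "\<nexists>k. \<alpha> = of_nat k \<and> k \<le> n"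
  obtains m where "1 \<le> m" "m \<le> n" "of_nat m < \<alpha>" "m < n \<Longrightarrow> \<alpha> < of_nat m + 1"
proof -
  define m where "m = min (nat \<lfloor>\<alpha>\<rfloor>) n"
  have fl: "of_nat (nat \<lfloor>\<alpha>\<rfloor>) = of_int \<lfloor>\<alpha>\<rfloor>" "of_int \<lfloor>\<alpha>\<rfloor> \<le> \<alpha>" "\<alpha> < of_int \<lfloor>\<alpha>\<rfloor> + 1"
    using assms(1) floor_correct[of \<alpha>] by auto
  have "1 \<le> \<lfloor>\<alpha>\<rfloor>" using assms(1) by (simp add: le_floor_iff)
  then have "1 \<le> nat \<lfloor>\<alpha>\<rfloor>" by arith
  then have "1 \<le> m" using assms(2) unfolding m_def by (intro min.boundedI)
  moreover have "m \<le> n" unfolding m_def by simp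
  moreover have "of_nat m < \<alpha>"
  proof (cases "nat \<lfloor>\<alpha>\<rfloor> \<le> n")
    case True
    then show ?thesis using fl assms(3) unfolding m_def by (metis min_absorb1 order_le_less)
  next
    case False
    then have "of_nat n < (of_int \<lfloor>\<alpha>\<rfloor> :: rat)" using fl(1) by simp
    moreover have "m = n" using False unfolding m_def by simp
    ultimately show ?thesis using fl(2) by linarith
  qed
  moreover have "\<alpha> < of_nat m + 1" if "m < n"
    using that fl unfolding m_def by (simp add: min_def split: if_splits)
  ultimately show ?thesis by (rule that)
qed

context
  fixes n f A \<beta> \<alpha> d0
  assumes F: "Fpoly n f A = pzero" and hom: "\<forall>j\<le>n. homog (f j) (2 * j)"
    and A: "\<forall>q>\<beta>. coeff_mat A q = czero" and D: "top_term (Kdet A) (2 * \<beta> - 2 * \<alpha>) d0"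
begin

lemma Fpoly_zero_top_coeffs:
  assumes M: "\<forall>j\<le>n. summand_exponent \<alpha> j \<le> M"
  shows "(\<Sum>j\<in>{0..n}. if summand_exponent \<alpha> j = M
                        then d0 ^ (n - j) * evalC (f j) (coeff_mat A \<beta>) else 0) = 0"
proof -
  have "top_term (Fpoly n f A) (of_nat n * (2 * \<beta> - 2 * \<alpha>) + M)
      (\<Sum>j\<in>{0..n}. if of_nat n * (2 * \<beta> - 2 * \<alpha>) + summand_exponent \<alpha> j = of_nat n * (2 * \<beta> - 2 * \<alpha>) + M
                    then d0 ^ (n - j) * evalC (f j) (coeff_mat A \<beta>) else 0)"
    unfolding Fpoly_def using hom M by (intro top_term_sum top_term_Fpoly_summand A D) auto
  then show ?thesis using F by (simp add: top_term_def pzero_def)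
qed

lemma Fpoly_zero_unique_max:
  assumes k: "k \<le> n" "\<forall>j\<le>n. j \<noteq> k \<longrightarrow> summand_exponent \<alpha> j < summand_exponent \<alpha> k"
  shows "d0 ^ (n - k) * evalC (f k) (coeff_mat A \<beta>) = 0"
proof -
  have "\<forall>j\<le>n. summand_exponent \<alpha> j \<le> summand_exponent \<alpha> k" using k(2) by (metis less_imp_le order_refl)
  note top = Fpoly_zero_top_coeffs[OF this]
  let ?c = "\<lambda>j. d0 ^ (n - j) * evalC (f j) (coeff_mat A \<beta>)"
  have "(\<Sum>j\<in>{0..n}. if summand_exponent \<alpha> j = summand_exponent \<alpha> k then ?c j else 0)
      = (\<Sum>j\<in>{0..n}. if j = k then ?c k else 0)"
  proof (rule sum.cong[OF refl])
    fix j assume "j \<in> {0..n}"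
    then show "(if summand_exponent \<alpha> j = summand_exponent \<alpha> k then ?c j else 0)
        = (if j = k then ?c k else 0)"
      using k(2) by (cases "j = k") auto
  qed
  then show ?thesis using top k(1) by simp
qed

lemma Fpoly_zero_tie:
  assumes k: "1 \<le> k" "k \<le> n" "summand_exponent \<alpha> (k - 1) = summand_exponent \<alpha> k"
      "\<forall>j\<le>n. j \<noteq> k \<and> j \<noteq> k - 1 \<longrightarrow> summand_exponent \<alpha> j < summand_exponent \<alpha> k"
  shows "d0 ^ (n - k) * evalC (f k) (coeff_mat A \<beta>)
         + d0 ^ (n - k + 1) * evalC (f (k - 1)) (coeff_mat A \<beta>) = 0"
proof -
  let ?c = "\<lambda>j. d0 ^ (n - j) * evalC (f j) (coeff_mat A \<beta>)"
  have "\<forall>j\<le>n. summand_exponent \<alpha> j \<le> summand_exponent \<alpha> k" using k by (metis less_imp_le order_refl)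
  note top = Fpoly_zero_top_coeffs[OF this]
  have "(\<Sum>j\<in>{0..n}. if summand_exponent \<alpha> j = summand_exponent \<alpha> k then ?c j else 0)
      = (\<Sum>j\<in>{0..n}. (if j = k then ?c k else 0) + (if j = k - 1 then ?c (k - 1) else 0))"
  proof (rule sum.cong[OF refl])
    fix j assume "j \<in> {0..n}"
    then show "(if summand_exponent \<alpha> j = summand_exponent \<alpha> k then ?c j else 0)
        = (if j = k then ?c k else 0) + (if j = k - 1 then ?c (k - 1) else 0)"
      using k by (cases "j = k \<or> j = k - 1") auto
  qed
  moreover have "k - 1 \<le> n" using k by simp
  ultimately have "?c k + ?c (k - 1) = 0" using top k by (simp add: sum.distrib)
  moreover have e: "n - (k - 1) = n - k + 1" using k by simp
  ultimately show ?thesis by (simp only: e)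
qed

lemma Fpoly_zero_valuation_ge_1:
  assumes "d0 \<noteq> 0" and "\<not> det_dvd (f 0)"
  shows "1 \<le> \<alpha>"
proof (rule ccontr)
  assume "\<not> 1 \<le> \<alpha>"
  then have "\<forall>j\<le>n. j \<noteq> 0 \<longrightarrow> summand_exponent \<alpha> j < summand_exponent \<alpha> 0"
    by (auto intro: summand_exponent_unique_max)
  then have "d0 ^ n * evalC (f 0) (coeff_mat A \<beta>) = 0"
    using Fpoly_zero_unique_max[of 0] by simp
  moreover have "evalC (f 0) (coeff_mat A \<beta>) \<noteq> 0"
    using hom assms(2) by (intro evalC_degree_0_nonzero) auto
  ultimately show False using \<open>d0 \<noteq> 0\<close> by simp
qed


lemma Fpoly_zero_tie_in_Sig_C:
  assumes "g * g * d0 = 1" "csmult g (coeff_mat A \<beta>) \<noteq> czero" "cdet (coeff_mat A \<beta>) = 0"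
    and k: "\<alpha> = of_nat k" "1 \<le> k" "k \<le> n"
  shows "cone_point (real k) (csmult g (coeff_mat A \<beta>)) \<in> Sig_C n f"
proof -
  let ?B = "csmult g (coeff_mat A \<beta>)"
  have "d0 ^ (n - k) * evalC (f k) (coeff_mat A \<beta>) + d0 ^ (n - k + 1) * evalC (f (k - 1)) (coeff_mat A \<beta>) = 0"
    using k summand_exponent_tie summand_exponent_tie_max by (intro Fpoly_zero_tie) auto
  then have "g ^ (2 * k) * evalC (f k) (coeff_mat A \<beta>)
      = - (g ^ (2 * (k - 1)) * evalC (f (k - 1)) (coeff_mat A \<beta>))"
    by (rule tie_relation_rescaled[OF assms(1) k(2,3)])
  moreover have "homog (f k) (2 * k)" "homog (f (k - 1)) (2 * (k - 1))" using hom k(3) by auto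
  ultimately have "evalC (f k) ?B = - evalC (f (k - 1)) ?B" by (simp add: evalC_csmult)
  moreover have "cdet ?B = 0" using assms(3) by (simp add: cdet_csmult)
  ultimately show ?thesis
    using assms(2) hom k(2,3) by (intro cone_point_in_Sig_C[where deg = "2 * (k - 1)" and deg' = "2 * k"]) auto
qed

lemma Fpoly_zero_dominant_in_Sig_R:
  assumes "d0 \<noteq> 0" "csmult g (coeff_mat A \<beta>) \<noteq> czero" "cdet (coeff_mat A \<beta>) = 0"
    and m: "1 \<le> m" "m \<le> n" "of_nat m < \<alpha>" "m < n \<Longrightarrow> \<alpha> < of_nat m + 1"
  shows "cone_point (real_of_rat \<alpha>) (csmult g (coeff_mat A \<beta>)) \<in> Sig_R n f"
proof -
  let ?B = "csmult g (coeff_mat A \<beta>)"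
  have "d0 ^ (n - m) * evalC (f m) (coeff_mat A \<beta>) = 0"
    using m by (intro Fpoly_zero_unique_max allI impI summand_exponent_unique_max) auto
  moreover have "homog (f m) (2 * m)" using hom m(2) by simp
  ultimately have "evalC (f m) ?B = 0" using assms(1) by (simp add: evalC_csmult)
  moreover have "cdet ?B = 0" using assms(3) by (simp add: cdet_csmult)
  moreover have "real m < real_of_rat \<alpha>" "m < n \<Longrightarrow> real_of_rat \<alpha> < real m + 1"
    using m(3,4) by (metis of_rat_less of_rat_of_nat_eq, metis of_rat_less of_rat_of_nat_eq of_nat_Suc add.commute)
  ultimately show ?thesis using m(1,2) assms(2) by (intro cone_point_in_Sig_R) (auto simp: Rats_def)
qed

end

lemma VAL_singular_in_Sig_inf:
  assumes "A \<in> Surf n f" "Kdet A = pzero" and hom: "\<forall>j\<le>n. homog (f j) (2 * j)"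
  shows "VAL A \<in> Sig_inf n f"
proof -
  have KA: "Kmat A" and F: "Fpoly n f A = pzero" using assms(1) unfolding Surf_def by auto
  obtain \<beta> where A: "\<forall>q>\<beta>. coeff_mat A q = czero" and B0: "coeff_mat A \<beta> \<noteq> czero"
    using Kmat_top_exponent[OF KA] .
  (* With det A = 0 every alpha is admissible; alpha = n + 1 makes the f_n summand dominant. *)
  have D: "top_term (Kdet A) (2 * \<beta> - 2 * (of_nat n + 1)) 0"
    using assms(2) top_term_pzero by simp
  have "\<forall>j\<le>n. j \<noteq> n \<longrightarrow> summand_exponent (of_nat n + 1) j < summand_exponent (of_nat n + 1) n"
    by (auto intro: summand_exponent_unique_max)
  then have "evalC (f n) (coeff_mat A \<beta>) = 0" using Fpoly_zero_unique_max[OF F hom A D order_refl] by simp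
  moreover have "cdet (coeff_mat A \<beta>) = 0"
    using top_term_Kdet[OF A] assms(2) by (simp add: top_term_def pzero_def)
  ultimately have "cproj (coeff_mat A \<beta>) \<in> Cset f n" using B0 unfolding Cset_def by blast
  then show ?thesis using VAL_singular[OF assms(2) A B0] unfolding Sig_inf_def by simp
qed

lemma VAL_nonsingular_in_Sig_R_Sig_C:
  assumes "A \<in> Surf n f" "Kdet A \<noteq> pzero" "1 \<le> n"
    and hom: "\<forall>j\<le>n. homog (f j) (2 * j)" and f0: "\<not> det_dvd (f 0)"
  shows "VAL A \<in> Sig_R n f \<union> Sig_C n f"
proof -
  have KA: "Kmat A" and F: "Fpoly n f A = pzero" using assms(1) unfolding Surf_def by auto
  obtain \<beta> where A: "\<forall>q>\<beta>. coeff_mat A q = czero" and B0: "coeff_mat A \<beta> \<noteq> czero"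
    using Kmat_top_exponent[OF KA] .
  obtain \<alpha> d0 g where d0: "d0 \<noteq> 0" and ggd0: "g * g * d0 = 1"
    and D: "top_term (Kdet A) (2 * \<beta> - 2 * \<alpha>) d0"
    and VAL: "VAL A = cone_point (real_of_rat \<alpha>) (csmult g (coeff_mat A \<beta>))"
    using VAL_nonsingular[OF KA assms(2) A B0] .
  have B: "csmult g (coeff_mat A \<beta>) \<noteq> czero" using B0 ggd0 by (auto simp: csmult_eq_czero_iff)
  have \<alpha>: "1 \<le> \<alpha>" by (rule Fpoly_zero_valuation_ge_1[OF F hom A D d0 f0])
  then have det: "cdet (coeff_mat A \<beta>) = 0" by (intro cdet_coeff_mat_eq_0[OF A D]) simp
  show ?thesis
  proof (cases "\<exists>k. \<alpha> = of_nat k \<and> k \<le> n")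
    case True
    then obtain k where k: "\<alpha> = of_nat k" "k \<le> n" by blast
    with \<alpha> have "1 \<le> k" by simp
    with k show ?thesis using Fpoly_zero_tie_in_Sig_C[OF F hom A D ggd0 B det k(1) _ k(2)] VAL by simp
  next
    case False
    then obtain m where m: "1 \<le> m" "m \<le> n" "of_nat m < \<alpha>" "m < n \<Longrightarrow> \<alpha> < of_nat m + 1"
      using dominant_index_exists[OF \<alpha> assms(3)] by blast
    then show ?thesis using Fpoly_zero_dominant_in_Sig_R[OF F hom A D d0 B det m] VAL by simp
  qed
qed

theorem theorem5p1:
  fixes n :: nat and f :: "nat \<Rightarrow> cpoly4"
  assumes "n \<ge> 1"
    and "\<forall>j\<le>n. homog (f j) (2 * j)"
    and "\<forall>j\<le>n. \<not> det_dvd (f j)"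
  shows "VAL ` Surf n f \<subseteq> Sig_inf n f \<union> Sig_R n f \<union> Sig_C n f"
proof
  fix V assume "V \<in> VAL ` Surf n f"
  then obtain A where A: "A \<in> Surf n f" and V: "V = VAL A" by blast
  show "V \<in> Sig_inf n f \<union> Sig_R n f \<union> Sig_C n f"
  proof (cases "Kdet A = pzero")
    case True
    then show ?thesis using VAL_singular_in_Sig_inf[OF A True assms(2)] V by simp
  next
    case False
    then show ?thesis using VAL_nonsingular_in_Sig_R_Sig_C[OF A False assms(1,2)] assms(3) V by auto
  qed
qed

end
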